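(* $$\{\mathbf{M}\mathbf{X}\mathbf{M}^T:\mathbf{X}\in\mathcal{X}\cap\mathcal{H}\}=\left\{\mathbf{Y}\in\mathbb{S}^m:\ \mathrm{Tr}(\mathbf{Y})=1,\ \mathbf{Y}\succeq\tfrac14\mathbf{d}\mathbf{d}^T\text{ where }\mathbf{d}=\mathrm{diag}(\mathbf{Y})\right\}.$$
   Context: $\mathbf{e}$ is the all-ones vector, $\mathbb{S}^{k}$ the real symmetric $k\times k$ matrices, $\mathrm{diag}(\mathbf{Y})$ the vector of diagonal entries. $\mathcal{X}=\{\mathbf{X}\in\mathbb{S}^{m+1}:\mathrm{diag}(\mathbf{X})=\mathbf{e},\mathbf{X}\succeq\mathbf{0}\}$, $\mathbf{M}=[\mathbf{I}_m\ -\mathbf{e}]\in\mathbb{R}^{m\times(m+1)}$, $\mathcal{H}=\{\mathbf{X}\in\mathbb{S}^{m+1}:\mathrm{Tr}(\mathbf{M}\mathbf{X}\mathbf{M}^T)=1\}$. $\mathbf{A}\succeq\mathbf{B}$ means $\mathbf{A}-\mathbf{B}$ is positive semidefinite. *)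

theory Defs
  imports "Jordan_Normal_Form.Matrix"
begin

definition tr :: "real mat \<Rightarrow> real" where
  "tr A = (\<Sum>i<dim_row A. A $$ (i,i))"

definition psd :: "nat \<Rightarrow> real mat \<Rightarrow> bool" where
  "psd n A \<longleftrightarrow> A \<in> carrier_mat n n \<and> A\<^sup>T = A \<and>
     (\<forall>x \<in> carrier_vec n. x \<bullet> (A *\<^sub>v x) \<ge> 0)"

definition diagv :: "real mat \<Rightarrow> real vec" where
  "diagv A = vec (dim_row A) (\<lambda>i. A $$ (i,i))"

definition ellX :: "nat \<Rightarrow> real mat set" where
  "ellX m = {X. psd (m+1) X \<and> diagv X = vec (m+1) (\<lambda>_. 1)}"

definition Mmat :: "nat \<Rightarrow> real mat" where
  "Mmat m = mat m (m+1) (\<lambda>(i,j). if j = m then -1 else if i = j then 1 else 0)"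

definition hypH :: "nat \<Rightarrow> real mat set" where
  "hypH m = {X. X \<in> carrier_mat (m+1) (m+1) \<and> X\<^sup>T = X \<and>
                tr (Mmat m * X * (Mmat m)\<^sup>T) = 1}"

definition loewner_ge :: "nat \<Rightarrow> real mat \<Rightarrow> real mat \<Rightarrow> bool" where
  "loewner_ge n A B \<longleftrightarrow> psd n (A - B)"

definition outer :: "real vec \<Rightarrow> real vec \<Rightarrow> real mat" where
  "outer u v = mat (dim_vec u) (dim_vec v) (\<lambda>(i,j). u $ i * v $ j)"

end

theory Submission imports Defs begin

(*
  If X has unit diagonal, Y = M X M^T has entries Y_ij = X_ij - X_im - X_jm + 1,
  so d_i = 2 - 2 X_im and Y - d d^T / 4 = (X_ij - X_im X_jm)_ij is the Schur complement
  of the corner entry X_mm = 1; hence it is psd iff X is.  Conversely, each Y of the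
  right-hand side is M X M^T for the unit-diagonal X with X_im = 1 - Y_ii / 2 obtained
  by inverting these formulas.
*)

lemma quadratic_form_eq_sum:
  assumes "A \<in> carrier_mat n n" "x \<in> carrier_vec n"
  shows "x \<bullet> (A *\<^sub>v x) = (\<Sum>i<n. \<Sum>j<n. x$i * A$$(i,j) * x$j)"
  using assms
  by (auto simp: scalar_prod_def mult_mat_vec_def row_def sum_distrib_left mult.assoc
      mult.commute mult.left_commute atLeast0LessThan intro!: sum.cong)

lemma symmetric_mat_index:
  assumes "A \<in> carrier_mat n n" "A\<^sup>T = A" "i < n" "j < n"
  shows "A$$(j,i) = A$$(i,j)"
  using assms by (metis carrier_matD index_transpose_mat(1))

lemma unit_diagv_index:
  assumes "X \<in> carrier_mat n n" "diagv X = vec n (\<lambda>_. 1)" "i < n"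
  shows "X$$(i,i) = 1"
  using assms(1,3) arg_cong[OF assms(2), of "\<lambda>v. v $ i"] by (simp add: diagv_def)

definition schur_last :: "nat \<Rightarrow> real mat \<Rightarrow> real mat" where
  "schur_last m X = mat m m (\<lambda>(i,j). X$$(i,j) - X$$(i,m) * X$$(m,j))"

lemma quadratic_form_schur_last:
  assumes X: "X \<in> carrier_mat (m+1) (m+1)" "X\<^sup>T = X" "X$$(m,m) = 1"
    and x: "x \<in> carrier_vec (m+1)"
  defines "u \<equiv> vec m (\<lambda>i. x$i)"
  shows "x \<bullet> (X *\<^sub>v x) =
    u \<bullet> (schur_last m X *\<^sub>v u) + ((\<Sum>i<m. x$i * X$$(i,m)) + x$m)\<^sup>2"
proof -
  define c where "c = (\<Sum>i<m. x$i * X$$(i,m))"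
  define Q where "Q = (\<Sum>i<m. \<Sum>j<m. x$i * X$$(i,j) * x$j)"
  have row_last: "(\<Sum>j<m. X$$(m,j) * x$j) = c"
    unfolding c_def using symmetric_mat_index[OF X(1,2)] by (intro sum.cong) auto
  have "x \<bullet> (X *\<^sub>v x) = (\<Sum>i<m+1. \<Sum>j<m+1. x$i * X$$(i,j) * x$j)"
    using quadratic_form_eq_sum[OF X(1) x] .
  also have "\<dots> = Q + x$m * c + x$m * (\<Sum>j<m. X$$(m,j) * x$j) + x$m * X$$(m,m) * x$m"
    by (simp add: Q_def c_def lessThan_Suc sum.distrib sum_distrib_left sum_distrib_right
        algebra_simps)
  also have "\<dots> = Q + 2 * c * x$m + (x$m)\<^sup>2"
    using row_last X(3) by (simp add: power2_eq_square)
  finally have lhs: "x \<bullet> (X *\<^sub>v x) = Q + 2 * c * x$m + (x$m)\<^sup>2" .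
  have "u \<bullet> (schur_last m X *\<^sub>v u) = (\<Sum>i<m. \<Sum>j<m. u$i * schur_last m X $$ (i,j) * u$j)"
    by (rule quadratic_form_eq_sum) (simp_all add: schur_last_def u_def)
  also have "\<dots> =
      (\<Sum>i<m. \<Sum>j<m. x$i * X$$(i,j) * x$j - (x$i * X$$(i,m)) * (X$$(m,j) * x$j))"
    by (intro sum.cong refl) (simp add: schur_last_def u_def algebra_simps)
  also have "\<dots> = Q - c * (\<Sum>j<m. X$$(m,j) * x$j)"
    by (simp add: Q_def c_def sum_subtractf sum_product)
  also have "\<dots> = Q - c\<^sup>2"
    using row_last by (simp add: power2_eq_square)
  finally show ?thesis
    using lhs by (simp add: c_def power2_eq_square algebra_simps)
qed

lemma psd_iff_psd_schur_last:
  assumes X: "X \<in> carrier_mat (m+1) (m+1)" "X\<^sup>T = X" "X$$(m,m) = 1"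
  shows "psd (m+1) X \<longleftrightarrow> psd m (schur_last m X)"
proof -
  have schur_sym: "(schur_last m X)\<^sup>T = schur_last m X"
    by (rule eq_matI) (auto simp: schur_last_def symmetric_mat_index[OF X(1,2)])
  have "x \<bullet> (X *\<^sub>v x) \<ge> 0"
    if schur_psd: "psd m (schur_last m X)" and x: "x \<in> carrier_vec (m+1)" for x
  proof -
    have "vec m (\<lambda>i. x$i) \<bullet> (schur_last m X *\<^sub>v vec m (\<lambda>i. x$i)) \<ge> 0"
      using schur_psd by (simp add: psd_def)
    then show ?thesis
      using quadratic_form_schur_last[OF X x] by simp
  qed
  moreover have "u \<bullet> (schur_last m X *\<^sub>v u) \<ge> 0"
    if X_psd: "psd (m+1) X" and u: "u \<in> carrier_vec m" for u
  proof -
    \<comment> \<open>the last coordinate is chosen to cancel the square term\<close>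
    define x where "x = vec (m+1) (\<lambda>k. if k < m then u$k else - (\<Sum>i<m. u$i * X$$(i,m)))"
    have x: "x \<in> carrier_vec (m+1)" by (simp add: x_def)
    have "vec m (\<lambda>i. x$i) = u"
      using u by (auto simp: x_def)
    moreover have "(\<Sum>i<m. x$i * X$$(i,m)) + x$m = 0"
      by (simp add: x_def)
    moreover have "x \<bullet> (X *\<^sub>v x) \<ge> 0"
      using X_psd x by (simp add: psd_def)
    ultimately show ?thesis
      using quadratic_form_schur_last[OF X x] by simp
  qed
  ultimately show ?thesis
    using X schur_sym by (auto simp: psd_def schur_last_def)
qed

lemma Mmat_carrier: "Mmat m \<in> carrier_mat m (m+1)"
  by (simp add: Mmat_def)

lemma Mmat_conj_carrier:
  assumes "X \<in> carrier_mat (m+1) (m+1)"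
  shows "Mmat m * X * (Mmat m)\<^sup>T \<in> carrier_mat m m"
  using assms Mmat_carrier by (metis mult_carrier_mat transpose_carrier_mat)

lemma Mmat_conj_index:
  assumes X: "X \<in> carrier_mat (m+1) (m+1)" and i: "i < m" and j: "j < m"
  shows "(Mmat m * X * (Mmat m)\<^sup>T) $$ (i,j) = X$$(i,j) - X$$(i,m) - X$$(m,j) + X$$(m,m)"
proof -
  have MX: "(Mmat m * X) $$ (i,k) = X$$(i,k) - X$$(m,k)" if k: "k < m+1" for k
  proof -
    have "(Mmat m * X) $$ (i,k) =
        (\<Sum>l<m+1. (if l = m then -1 else if i = l then 1 else 0) * X$$(l,k))"
      using X i k Mmat_carrier by (simp add: scalar_prod_def Mmat_def atLeast0LessThan)
    also have "\<dots> = X$$(i,k) - X$$(m,k)"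
      using i by (simp add: lessThan_Suc if_distrib[of "\<lambda>c. c * _"] cong: if_cong)
    finally show ?thesis .
  qed
  have "(Mmat m * X * (Mmat m)\<^sup>T) $$ (i,j) =
      (\<Sum>l<m+1. (Mmat m * X) $$ (i,l) * (if l = m then -1 else if j = l then 1 else 0))"
    using X i j Mmat_carrier by (simp add: scalar_prod_def Mmat_def atLeast0LessThan)
  also have "\<dots> = (\<Sum>l<m+1. (X$$(i,l) - X$$(m,l)) * (if l = m then -1 else if j = l then 1 else 0))"
    using MX by (intro sum.cong) auto
  also have "\<dots> = X$$(i,j) - X$$(i,m) - X$$(m,j) + X$$(m,m)"
    using j by (simp add: lessThan_Suc if_distrib[of "\<lambda>c. _ * c"] cong: if_cong)
  finally show ?thesis .
qed

lemma Mmat_conj_symmetric: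
  assumes X: "X \<in> carrier_mat (m+1) (m+1)" "X\<^sup>T = X"
  shows "(Mmat m * X * (Mmat m)\<^sup>T)\<^sup>T = Mmat m * X * (Mmat m)\<^sup>T"
proof (rule eq_matI)
  fix i j assume "i < dim_row (Mmat m * X * (Mmat m)\<^sup>T)" "j < dim_col (Mmat m * X * (Mmat m)\<^sup>T)"
  then have ij: "i < m" "j < m"
    using Mmat_conj_carrier[OF X(1)] by auto
  then have "(Mmat m * X * (Mmat m)\<^sup>T)\<^sup>T $$ (i,j) = (Mmat m * X * (Mmat m)\<^sup>T) $$ (j,i)"
    using Mmat_conj_carrier[OF X(1)] by auto
  then show "(Mmat m * X * (Mmat m)\<^sup>T)\<^sup>T $$ (i,j) = (Mmat m * X * (Mmat m)\<^sup>T) $$ (i,j)"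
    using ij by (simp add: Mmat_conj_index[OF X(1)] symmetric_mat_index[OF X(1,2)])
qed (use Mmat_conj_carrier[OF X(1)] in auto)

lemma Mmat_conj_minus_outer_diagv:
  assumes X: "X \<in> carrier_mat (m+1) (m+1)" "X\<^sup>T = X" "diagv X = vec (m+1) (\<lambda>_. 1)"
  defines "Y \<equiv> Mmat m * X * (Mmat m)\<^sup>T"
  shows "Y - (1/4) \<cdot>\<^sub>m outer (diagv Y) (diagv Y) = schur_last m X"
proof -
  have Y: "Y \<in> carrier_mat m m"
    unfolding Y_def by (rule Mmat_conj_carrier[OF X(1)])
  note unit_diag = unit_diagv_index[OF X(1,3)]
  have Y_index: "Y$$(i,j) = X$$(i,j) - X$$(i,m) - X$$(j,m) + 1" if "i < m" "j < m" for i j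
    using that Mmat_conj_index[OF X(1)] symmetric_mat_index[OF X(1,2), of j m] unit_diag[of m]
    unfolding Y_def by simp
  have diag_Y: "diagv Y $ i = 2 - 2 * X$$(i,m)" if "i < m" for i
    using Y that Y_index unit_diag by (simp add: diagv_def)
  have dim_diag_Y: "dim_vec (diagv Y) = m"
    using Y by (simp add: diagv_def)
  show ?thesis
  proof (rule eq_matI)
    fix i j assume "i < dim_row (schur_last m X)" "j < dim_col (schur_last m X)"
    then have ij: "i < m" "j < m"
      by (auto simp: schur_last_def)
    have "(Y - (1/4) \<cdot>\<^sub>m outer (diagv Y) (diagv Y)) $$ (i,j) =
        Y$$(i,j) - (1/4) * (diagv Y $ i * diagv Y $ j)"
      using Y ij dim_diag_Y by (simp add: outer_def)
    also have "\<dots> = X$$(i,j) - X$$(i,m) * X$$(m,j)"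
      using ij by (simp add: Y_index diag_Y symmetric_mat_index[OF X(1,2), of j m] algebra_simps)
    finally show "(Y - (1/4) \<cdot>\<^sub>m outer (diagv Y) (diagv Y)) $$ (i,j) = schur_last m X $$ (i,j)"
      using ij by (simp add: schur_last_def)
  qed (use Y dim_diag_Y in \<open>auto simp: schur_last_def outer_def\<close>)
qed

lemma psd_iff_loewner_ge_Mmat_conj:
  assumes X: "X \<in> carrier_mat (m+1) (m+1)" "X\<^sup>T = X" "diagv X = vec (m+1) (\<lambda>_. 1)"
  defines "Y \<equiv> Mmat m * X * (Mmat m)\<^sup>T"
  shows "psd (m+1) X \<longleftrightarrow> loewner_ge m Y ((1/4) \<cdot>\<^sub>m outer (diagv Y) (diagv Y))"
  using psd_iff_psd_schur_last[OF X(1,2) unit_diagv_index[OF X(1,3)]]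
  unfolding loewner_ge_def Y_def Mmat_conj_minus_outer_diagv[OF X] by simp

definition elliptope_lift :: "nat \<Rightarrow> real mat \<Rightarrow> real mat" where
  "elliptope_lift m Y = mat (m+1) (m+1) (\<lambda>(i,j).
     let a = (\<lambda>k. 1 - Y$$(k,k)/2) in
     if i < m \<and> j < m then Y$$(i,j) + a i + a j - 1
     else if i < m then a i else if j < m then a j else 1)"

lemma elliptope_lift_carrier: "elliptope_lift m Y \<in> carrier_mat (m+1) (m+1)"
  by (simp add: elliptope_lift_def)

lemma elliptope_lift_symmetric:
  assumes "Y \<in> carrier_mat m m" "Y\<^sup>T = Y"
  shows "(elliptope_lift m Y)\<^sup>T = elliptope_lift m Y"
  by (rule eq_matI) (auto simp: elliptope_lift_def Let_def symmetric_mat_index[OF assms])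

lemma diagv_elliptope_lift: "diagv (elliptope_lift m Y) = vec (m+1) (\<lambda>_. 1)"
  by (rule eq_vecI) (auto simp: diagv_def elliptope_lift_def)

lemma Mmat_conj_elliptope_lift:
  assumes "Y \<in> carrier_mat m m"
  shows "Mmat m * elliptope_lift m Y * (Mmat m)\<^sup>T = Y"
proof (rule eq_matI)
  fix i j assume "i < dim_row Y" "j < dim_col Y"
  then show "(Mmat m * elliptope_lift m Y * (Mmat m)\<^sup>T) $$ (i,j) = Y $$ (i,j)"
    using assms
    by (subst Mmat_conj_index[OF elliptope_lift_carrier]) (auto simp: elliptope_lift_def)
qed (use assms Mmat_conj_carrier[OF elliptope_lift_carrier, of m Y] in auto)

theorem lemma6:
  fixes m :: nat
  shows "(\<lambda>X. Mmat m * X * (Mmat m)\<^sup>T) ` (ellX m \<inter> hypH m) =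
    {Y. Y \<in> carrier_mat m m \<and> Y\<^sup>T = Y \<and> tr Y = 1 \<and>
        (let d = diagv Y in loewner_ge m Y ((1/4) \<cdot>\<^sub>m (outer d d)))}"
    (is "?image = ?rhs")
proof
  show "?image \<subseteq> ?rhs"
  proof (rule image_subsetI)
    fix X assume "X \<in> ellX m \<inter> hypH m"
    then have X: "X \<in> carrier_mat (m+1) (m+1)" "X\<^sup>T = X" "diagv X = vec (m+1) (\<lambda>_. 1)"
      "psd (m+1) X" "tr (Mmat m * X * (Mmat m)\<^sup>T) = 1"
      by (auto simp: ellX_def hypH_def psd_def)
    then show "Mmat m * X * (Mmat m)\<^sup>T \<in> ?rhs"
      using psd_iff_loewner_ge_Mmat_conj[OF X(1-3)]
      by (simp add: X Let_def Mmat_conj_carrier Mmat_conj_symmetric)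
  qed
  show "?rhs \<subseteq> ?image"
  proof (rule subsetI)
    fix Y assume "Y \<in> ?rhs"
    then have Y: "Y \<in> carrier_mat m m" "Y\<^sup>T = Y" "tr Y = 1"
      "loewner_ge m Y ((1/4) \<cdot>\<^sub>m outer (diagv Y) (diagv Y))"
      by (simp_all add: Let_def)
    note lift = elliptope_lift_carrier[of m Y] elliptope_lift_symmetric[OF Y(1,2)]
      diagv_elliptope_lift[of m Y] Mmat_conj_elliptope_lift[OF Y(1)]
    have "Y = Mmat m * elliptope_lift m Y * (Mmat m)\<^sup>T"
      using lift(4) by simp
    moreover have "elliptope_lift m Y \<in> ellX m \<inter> hypH m"
      using lift Y psd_iff_loewner_ge_Mmat_conj[OF lift(1-3)]
      by (simp add: ellX_def hypH_def)
    ultimately show "Y \<in> ?image"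
      by blast
  qed
qed

end
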